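(* Let $D$ be a directed graph and $(V(D),\mathcal C)$ its corresponding connectoid. Then the end space of $D$ is homeomorphic to the end space of $(V(D),\mathcal C)$.
   Context: A connectoid is given by a set $S$ and a set $\mathcal F$ of finite subsets of $S$ such that (i) $F\cup F'\in\mathcal F$ whenever $F,F'\in\mathcal F$ and $F\cap F'\neq\emptyset$, and (ii) $\emptyset\in\mathcal F$ and $\{s\}\in\mathcal F$ for every $s\in S$. A set $C\subseteq S$ is connected if for all $x,y\in C$ there is $F\in\mathcal F$ with $F\subseteq C$ and $x,y\in F$. For $S'\subseteq S$, $\mathcal K(S')$ is the set of maximal connected subsets (components) of $S'$. The corresponding connectoid of a directed graph $D$ has $S=V(D)$ and $\mathcal F$ the set of vertex sets of finite strongly connected subgraphs of $D$; its connected sets are exactly the vertex sets of strongly connected subgraphs of $D$. A necklace is a connected set $N$ for which there is a family $(H_n)_{n\in\mathbb N}$ of finite connected sets with $N=\bigcup_n H_n$ and $H_i\cap H_j\neq\emptyset$ iff $|i-j|\le 1$. For finite $X\subseteq S$, the $X$-tail of $N$ is the unique element of $\mathcal K(N\setminus X)$ containing all but finitely many elements of $N$. Two necklaces are equivalent if for every finite $X$ their $X$-tails lie in the same element of $\mathcal K(S\setminus X)$; ends of the connectoid are the equivalence classes; $K(X,\omega)$ is the element of $\mathcal K(S\setminus X)$ containing the $X$-tails of the necklaces of $\omega$; the end space has the topology generated by the sets $\{\omega:K(X,\omega)=K\}$ for finite $X$ and $K\in\mathcal K(S\setminus X)$. Ends of a directed graph $D$ (Bürger–Melcher): a directed ray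 is a ray with all edges oriented away from its first vertex. A directed ray $R$ is solid if for every finite $A\subseteq V(D)$ it has a tail in some strong component of $D-A$. Two solid rays are equivalent if for every finite $A\subseteq V(D)$ they have tails in the same strong component of $D-A$; the equivalence classes are the ends of $D$, and $K(A,\omega)$ is that strong component. The end space of $D$ carries the topology generated by the sets $\{\omega: K(A,\omega)=K\}$ for finite $A\subseteq V(D)$ and strong components $K$ of $D-A$. *)

theory Defs
  imports "HOL-Analysis.Analysis"
begin

definition connectoid :: "'a set \<Rightarrow> 'a set set \<Rightarrow> bool" where
  "connectoid S F \<longleftrightarrow>
     (\<forall>X\<in>F. finite X \<and> X \<subseteq> S) \<and>
     (\<forall>X\<in>F. \<forall>Y\<in>F. X \<inter> Y \<noteq> {} \<longrightarrow> X \<union> Y \<in> F) \<and>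
     {} \<in> F \<and> (\<forall>s\<in>S. {s} \<in> F)"

definition cn_connected :: "'a set \<Rightarrow> 'a set set \<Rightarrow> 'a set \<Rightarrow> bool" where
  "cn_connected S F C \<longleftrightarrow> C \<subseteq> S \<and>
     (\<forall>x\<in>C. \<forall>y\<in>C. \<exists>X\<in>F. X \<subseteq> C \<and> x \<in> X \<and> y \<in> X)"

definition cn_components :: "'a set \<Rightarrow> 'a set set \<Rightarrow> 'a set \<Rightarrow> 'a set set" where
  "cn_components S F S' = {C. C \<subseteq> S' \<and> cn_connected S F C \<and>
       (\<forall>C'. C \<subseteq> C' \<and> C' \<subseteq> S' \<and> cn_connected S F C' \<longrightarrow> C' = C)}"

definition necklace :: "'a set \<Rightarrow> 'a set set \<Rightarrow> 'a set \<Rightarrow> bool" where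
  "necklace S F N \<longleftrightarrow> cn_connected S F N \<and>
     (\<exists>H :: nat \<Rightarrow> 'a set.
        (\<forall>n. finite (H n) \<and> cn_connected S F (H n)) \<and>
        N = (\<Union>n. H n) \<and>
        (\<forall>i j. H i \<inter> H j \<noteq> {} \<longleftrightarrow> i \<le> j + 1 \<and> j \<le> i + 1))"

definition necklace_tail :: "'a set \<Rightarrow> 'a set set \<Rightarrow> 'a set \<Rightarrow> 'a set \<Rightarrow> 'a set" where
  "necklace_tail S F N X =
     (THE T. T \<in> cn_components S F (N - X) \<and> finite (N - T))"

definition necklace_equiv :: "'a set \<Rightarrow> 'a set set \<Rightarrow> 'a set \<Rightarrow> 'a set \<Rightarrow> bool" where
  "necklace_equiv S F N N' \<longleftrightarrow>
     (\<forall>X. finite X \<and> X \<subseteq> S \<longrightarrow>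
        (\<exists>K\<in>cn_components S F (S - X).
           necklace_tail S F N X \<subseteq> K \<and> necklace_tail S F N' X \<subseteq> K))"

definition cn_ends :: "'a set \<Rightarrow> 'a set set \<Rightarrow> 'a set set set" where
  "cn_ends S F = {{N'. necklace S F N' \<and> necklace_equiv S F N N'} | N. necklace S F N}"

definition cn_end_comp :: "'a set \<Rightarrow> 'a set set \<Rightarrow> 'a set \<Rightarrow> 'a set set \<Rightarrow> 'a set" where
  "cn_end_comp S F X \<omega> =
     (THE K. K \<in> cn_components S F (S - X) \<and> (\<forall>N\<in>\<omega>. necklace_tail S F N X \<subseteq> K))"

definition cn_end_space :: "'a set \<Rightarrow> 'a set set \<Rightarrow> 'a set set topology" where
  "cn_end_space S F =
     subtopology
       (topology_generated_by
          {{\<omega> \<in> cn_ends S F. cn_end_comp S F X \<omega> = K} | X K.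
             finite X \<and> X \<subseteq> S \<and> K \<in> cn_components S F (S - X)})
       (cn_ends S F)"

text \<open>A directed graph D is given by a vertex set V and an edge relation E \<subseteq> V \<times> V
(parallel edges are irrelevant for strong connectivity and rays).\<close>

definition strongly_connected_set :: "'a set \<Rightarrow> ('a \<times> 'a) set \<Rightarrow> 'a set \<Rightarrow> bool" where
  "strongly_connected_set V E C \<longleftrightarrow> C \<subseteq> V \<and>
     (\<forall>x\<in>C. \<forall>y\<in>C. (x, y) \<in> (E \<inter> (C \<times> C))\<^sup>*)"

definition strong_components :: "'a set \<Rightarrow> ('a \<times> 'a) set \<Rightarrow> 'a set \<Rightarrow> 'a set set" where
  "strong_components V E A = {K. K \<subseteq> V - A \<and> K \<noteq> {} \<and> strongly_connected_set V E K \<and>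
       (\<forall>K'. K \<subseteq> K' \<and> K' \<subseteq> V - A \<and> strongly_connected_set V E K' \<longrightarrow> K' = K)}"

definition digraph_connectoid_family :: "'a set \<Rightarrow> ('a \<times> 'a) set \<Rightarrow> 'a set set" where
  "digraph_connectoid_family V E = {C. finite C \<and> strongly_connected_set V E C}"

definition directed_ray :: "'a set \<Rightarrow> ('a \<times> 'a) set \<Rightarrow> (nat \<Rightarrow> 'a) \<Rightarrow> bool" where
  "directed_ray V E r \<longleftrightarrow> inj r \<and> (\<forall>n. r n \<in> V) \<and> (\<forall>n. (r n, r (Suc n)) \<in> E)"

definition tail_in :: "(nat \<Rightarrow> 'a) \<Rightarrow> 'a set \<Rightarrow> bool" where
  "tail_in r K \<longleftrightarrow> (\<exists>n. \<forall>m\<ge>n. r m \<in> K)"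

definition solid_ray :: "'a set \<Rightarrow> ('a \<times> 'a) set \<Rightarrow> (nat \<Rightarrow> 'a) \<Rightarrow> bool" where
  "solid_ray V E r \<longleftrightarrow> directed_ray V E r \<and>
     (\<forall>A. finite A \<and> A \<subseteq> V \<longrightarrow> (\<exists>K\<in>strong_components V E A. tail_in r K))"

definition ray_equiv :: "'a set \<Rightarrow> ('a \<times> 'a) set \<Rightarrow> (nat \<Rightarrow> 'a) \<Rightarrow> (nat \<Rightarrow> 'a) \<Rightarrow> bool" where
  "ray_equiv V E r s \<longleftrightarrow>
     (\<forall>A. finite A \<and> A \<subseteq> V \<longrightarrow> (\<exists>K\<in>strong_components V E A. tail_in r K \<and> tail_in s K))"

definition dg_ends :: "'a set \<Rightarrow> ('a \<times> 'a) set \<Rightarrow> (nat \<Rightarrow> 'a) set set" where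
  "dg_ends V E = {{s. solid_ray V E s \<and> ray_equiv V E r s} | r. solid_ray V E r}"

definition dg_end_comp :: "'a set \<Rightarrow> ('a \<times> 'a) set \<Rightarrow> 'a set \<Rightarrow> (nat \<Rightarrow> 'a) set \<Rightarrow> 'a set" where
  "dg_end_comp V E A \<omega> = (THE K. K \<in> strong_components V E A \<and> (\<forall>r\<in>\<omega>. tail_in r K))"

definition dg_end_space :: "'a set \<Rightarrow> ('a \<times> 'a) set \<Rightarrow> (nat \<Rightarrow> 'a) set topology" where
  "dg_end_space V E =
     subtopology
       (topology_generated_by
          {{\<omega> \<in> dg_ends V E. dg_end_comp V E A \<omega> = K} | A K.
             finite A \<and> A \<subseteq> V \<and> K \<in> strong_components V E A})
       (dg_ends V E)"

end

theory Submission
  imports Defs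
begin

text \<open>An end of either kind determines its direction: the map sending each finite vertex set
  \<open>A\<close> to the strong component \<open>K(A, \<omega>)\<close> of \<open>D - A\<close>. In both cases two rays (necklaces) are
  equivalent iff they have the same direction, and the basic open sets are exactly the sets of
  ends whose direction takes a prescribed value at \<open>A\<close>, so each end space is homeomorphic to the
  space of its directions. It remains to see that rays and necklaces realise the same directions.
  A necklace contains a ray: walk inside each bead along a shortest path to the next bead. A solid
  ray yields a necklace: choose each bead as a finite strongly connected subgraph of
  \<open>K(A, \<omega>)\<close>, where \<open>A\<close> is the union of the earlier beads, joining two vertices of the ray.\<close>

lemma rtrancl_Int_Times_mono:
  "W \<subseteq> W' \<Longrightarrow> (x, y) \<in> (E \<inter> W \<times> W)\<^sup>* \<Longrightarrow> (x, y) \<in> (E \<inter> W' \<times> W')\<^sup>*"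
  by (erule rtrancl_mono[THEN subsetD, rotated]) blast

lemma strongly_connected_set_singleton: "v \<in> V \<Longrightarrow> strongly_connected_set V E {v}"
  unfolding strongly_connected_set_def by auto

lemma strongly_connected_set_subset: "strongly_connected_set V E C \<Longrightarrow> C \<subseteq> V"
  unfolding strongly_connected_set_def by blast

lemma strongly_connected_set_Un:
  assumes "strongly_connected_set V E C" "strongly_connected_set V E D" "C \<inter> D \<noteq> {}"
  shows "strongly_connected_set V E (C \<union> D)"
proof -
  obtain z where z: "z \<in> C" "z \<in> D" using assms(3) by blast
  let ?R = "(E \<inter> (C \<union> D) \<times> (C \<union> D))\<^sup>*"
  have "(x, y) \<in> ?R" if "x \<in> C \<and> y \<in> C \<or> x \<in> D \<and> y \<in> D" for x y
    using assms(1,2) that rtrancl_Int_Times_mono[of C "C \<union> D"] rtrancl_Int_Times_mono[of D "C \<union> D"]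
    unfolding strongly_connected_set_def by blast
  then have "(x, y) \<in> ?R" if "x \<in> C \<union> D" "y \<in> C \<union> D" for x y
    using that z rtrancl_trans[of x z] by blast
  then show ?thesis
    using assms(1,2) unfolding strongly_connected_set_def by blast
qed

lemma strongly_connected_set_UN_chain:
  assumes "\<And>n. strongly_connected_set V E (H n)" "\<And>n. H n \<inter> H (Suc n) \<noteq> {}"
  shows "strongly_connected_set V E (\<Union>n. H n)"
proof -
  have initial: "strongly_connected_set V E (\<Union>k\<le>m. H k)" for m
  proof (induction m)
    case (Suc m)
    have "(\<Union>k\<le>m. H k) \<inter> H (Suc m) \<noteq> {}" using assms(2)[of m] by auto
    moreover have "(\<Union>k\<le>Suc m. H k) = (\<Union>k\<le>m. H k) \<union> H (Suc m)"
      by (auto simp: atMost_Suc)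
    ultimately show ?case using strongly_connected_set_Un[OF Suc.IH assms(1)] by simp
  qed (simp add: assms(1))
  show ?thesis unfolding strongly_connected_set_def
  proof (intro conjI ballI)
    show "(\<Union>n. H n) \<subseteq> V" using assms(1) strongly_connected_set_subset by blast
    fix x y assume "x \<in> (\<Union>n. H n)" "y \<in> (\<Union>n. H n)"
    then obtain i j where "x \<in> H i" "y \<in> H j" by blast
    then have "(x, y) \<in> (E \<inter> (\<Union>k\<le>max i j. H k) \<times> (\<Union>k\<le>max i j. H k))\<^sup>*"
      using initial[of "max i j"] unfolding strongly_connected_set_def by force
    then show "(x, y) \<in> (E \<inter> (\<Union>n. H n) \<times> (\<Union>n. H n))\<^sup>*"
      by (rule rtrancl_Int_Times_mono[rotated]) blast
  qed
qed

lemma rtrancl_finite_walk_vertices: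
  assumes "(x, y) \<in> (E \<inter> C \<times> C)\<^sup>*" "x \<in> C"
  obtains W where "finite W" "W \<subseteq> C" "x \<in> W" "y \<in> W"
    "\<And>z. z \<in> W \<Longrightarrow> (x, z) \<in> (E \<inter> W \<times> W)\<^sup>* \<and> (z, y) \<in> (E \<inter> W \<times> W)\<^sup>*"
proof -
  have "\<exists>W. finite W \<and> W \<subseteq> C \<and> x \<in> W \<and> y \<in> W \<and>
      (\<forall>z\<in>W. (x, z) \<in> (E \<inter> W \<times> W)\<^sup>* \<and> (z, y) \<in> (E \<inter> W \<times> W)\<^sup>*)"
    using assms(1)
  proof (induction rule: rtrancl_induct)
    case base
    show ?case using assms(2) by (intro exI[of _ "{x}"]) auto
  next
    case (step y y')
    then obtain W where W: "finite W" "W \<subseteq> C" "x \<in> W" "y \<in> W"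
      "\<forall>z\<in>W. (x, z) \<in> (E \<inter> W \<times> W)\<^sup>* \<and> (z, y) \<in> (E \<inter> W \<times> W)\<^sup>*" by blast
    let ?W = "insert y' W"
    have edge: "(y, y') \<in> (E \<inter> ?W \<times> ?W)\<^sup>*" using step(2) W(4) by blast
    have "(x, z) \<in> (E \<inter> ?W \<times> ?W)\<^sup>* \<and> (z, y') \<in> (E \<inter> ?W \<times> ?W)\<^sup>*" if "z \<in> W" for z
      using W(5) that rtrancl_Int_Times_mono[of W ?W] edge by (blast intro: rtrancl_trans)
    moreover have "(x, y') \<in> (E \<inter> ?W \<times> ?W)\<^sup>*"
      using calculation W(4) by (blast intro: rtrancl_trans)
    ultimately show ?case using W step(2) by (intro exI[of _ ?W]) auto
  qed
  then show ?thesis using that by blast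
qed

lemma strongly_connected_set_finite_witness:
  assumes "strongly_connected_set V E C" "x \<in> C" "y \<in> C"
  obtains W where "finite W" "strongly_connected_set V E W" "W \<subseteq> C" "x \<in> W" "y \<in> W"
proof -
  have walk: "(a, b) \<in> (E \<inter> C \<times> C)\<^sup>*" if "a \<in> C" "b \<in> C" for a b
    using assms(1) that unfolding strongly_connected_set_def by blast
  obtain W1 where W1: "finite W1" "W1 \<subseteq> C" "x \<in> W1" "y \<in> W1"
    "\<And>z. z \<in> W1 \<Longrightarrow> (x, z) \<in> (E \<inter> W1 \<times> W1)\<^sup>* \<and> (z, y) \<in> (E \<inter> W1 \<times> W1)\<^sup>*"
    using rtrancl_finite_walk_vertices[OF walk[OF assms(2,3)] assms(2)] by blast
  obtain W2 where W2: "finite W2" "W2 \<subseteq> C" "y \<in> W2" "x \<in> W2"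
    "\<And>z. z \<in> W2 \<Longrightarrow> (y, z) \<in> (E \<inter> W2 \<times> W2)\<^sup>* \<and> (z, x) \<in> (E \<inter> W2 \<times> W2)\<^sup>*"
    using rtrancl_finite_walk_vertices[OF walk[OF assms(3,2)] assms(3)] by blast
  let ?W = "W1 \<union> W2"
  let ?R = "(E \<inter> ?W \<times> ?W)\<^sup>*"
  have W1W: "(a, b) \<in> ?R" if "(a, b) \<in> (E \<inter> W1 \<times> W1)\<^sup>*" for a b
    using rtrancl_Int_Times_mono[OF _ that] by blast
  have W2W: "(a, b) \<in> ?R" if "(a, b) \<in> (E \<inter> W2 \<times> W2)\<^sup>*" for a b
    using rtrancl_Int_Times_mono[OF _ that] by blast
  have "(x, y) \<in> ?R" "(y, x) \<in> ?R" using W1(4,5) W2(4,5) W1W W2W by blast+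
  then have "(x, z) \<in> ?R \<and> (z, x) \<in> ?R" if "z \<in> ?W" for z
    using that W1(5) W2(5) W1W W2W by (blast intro: rtrancl_trans)
  then have "strongly_connected_set V E ?W"
    using W1(2) W2(2) strongly_connected_set_subset[OF assms(1)]
    unfolding strongly_connected_set_def by (blast intro: rtrancl_trans)
  then show ?thesis using that W1 W2 by blast
qed

lemma cn_connected_digraph_iff:
  "cn_connected V (digraph_connectoid_family V E) C \<longleftrightarrow> strongly_connected_set V E C"
proof
  assume C: "cn_connected V (digraph_connectoid_family V E) C"
  have "(x, y) \<in> (E \<inter> C \<times> C)\<^sup>*" if "x \<in> C" "y \<in> C" for x y
  proof -
    have "\<exists>X. strongly_connected_set V E X \<and> X \<subseteq> C \<and> x \<in> X \<and> y \<in> X"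
      using C that unfolding cn_connected_def digraph_connectoid_family_def by blast
    then obtain X where "X \<subseteq> C" "(x, y) \<in> (E \<inter> X \<times> X)\<^sup>*"
      unfolding strongly_connected_set_def by blast
    then show ?thesis by (rule rtrancl_Int_Times_mono)
  qed
  moreover have "C \<subseteq> V" using C unfolding cn_connected_def by (rule conjunct1)
  ultimately show "strongly_connected_set V E C"
    unfolding strongly_connected_set_def by blast
next
  assume C: "strongly_connected_set V E C"
  have "\<exists>X\<in>digraph_connectoid_family V E. X \<subseteq> C \<and> x \<in> X \<and> y \<in> X" if xy: "x \<in> C" "y \<in> C" for x y
  proof -
    obtain W where "finite W" "strongly_connected_set V E W" "W \<subseteq> C" "x \<in> W" "y \<in> W"
      using strongly_connected_set_finite_witness[OF C xy] .
    then show ?thesis unfolding digraph_connectoid_family_def by blast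
  qed
  then show "cn_connected V (digraph_connectoid_family V E) C"
    unfolding cn_connected_def using strongly_connected_set_subset[OF C] by blast
qed

definition strong_component_of :: "('a \<times> 'a) set \<Rightarrow> 'a set \<Rightarrow> 'a \<Rightarrow> 'a set" where
  "strong_component_of E U v = {w. (v, w) \<in> (E \<inter> U \<times> U)\<^sup>* \<and> (w, v) \<in> (E \<inter> U \<times> U)\<^sup>*}"

lemma strong_component_of_self: "v \<in> strong_component_of E U v"
  unfolding strong_component_of_def by simp

lemma strong_component_of_subset: "v \<in> U \<Longrightarrow> strong_component_of E U v \<subseteq> U"
  unfolding strong_component_of_def by (auto elim: rtrancl_induct)

lemma strong_component_of_eq:
  assumes "w \<in> strong_component_of E U v"
  shows "strong_component_of E U w = strong_component_of E U v"
  using assms unfolding strong_component_of_def by (blast intro: rtrancl_trans)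

lemma strong_component_of_maximal:
  assumes "strongly_connected_set V E C" "C \<subseteq> U" "v \<in> C"
  shows "C \<subseteq> strong_component_of E U v"
  using assms rtrancl_Int_Times_mono[OF assms(2)]
  unfolding strongly_connected_set_def strong_component_of_def by blast

lemma rtrancl_into_strong_component_of:
  assumes "(a, b) \<in> (E \<inter> U \<times> U)\<^sup>*" "(b, v) \<in> (E \<inter> U \<times> U)\<^sup>*" "(v, a) \<in> (E \<inter> U \<times> U)\<^sup>*"
  shows "(a, b) \<in> (E \<inter> strong_component_of E U v \<times> strong_component_of E U v)\<^sup>*"
  using assms
proof (induction rule: converse_rtrancl_induct)
  case (step a a')
  let ?R = "(E \<inter> U \<times> U)\<^sup>*"
  have "(v, a') \<in> ?R" "(a', v) \<in> ?R" using step by (blast intro: rtrancl_trans)+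
  moreover have "(a, v) \<in> ?R" using step.hyps(1) calculation(2) by (rule converse_rtrancl_into_rtrancl)
  ultimately have "(a, a') \<in> E \<inter> strong_component_of E U v \<times> strong_component_of E U v"
    using step.hyps(1) step.prems(2) unfolding strong_component_of_def by blast
  then show ?case using step.IH step.prems(1) \<open>(v, a') \<in> ?R\<close>
    by (blast intro: converse_rtrancl_into_rtrancl)
qed simp

lemma strongly_connected_strong_component_of:
  assumes "U \<subseteq> V" "v \<in> U"
  shows "strongly_connected_set V E (strong_component_of E U v)"
  unfolding strongly_connected_set_def
proof (intro conjI ballI)
  show "strong_component_of E U v \<subseteq> V" using strong_component_of_subset[OF assms(2)] assms(1) by blast
  fix x y assume "x \<in> strong_component_of E U v" "y \<in> strong_component_of E U v"
  then show "(x, y) \<in> (E \<inter> strong_component_of E U v \<times> strong_component_of E U v)\<^sup>*"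
    unfolding strong_component_of_def
    by (blast intro: rtrancl_into_strong_component_of[unfolded strong_component_of_def] rtrancl_trans)
qed

lemma maximal_strongly_connected_iff:
  assumes "U \<subseteq> V"
  shows "(K \<subseteq> U \<and> K \<noteq> {} \<and> strongly_connected_set V E K \<and>
          (\<forall>K'. K \<subseteq> K' \<and> K' \<subseteq> U \<and> strongly_connected_set V E K' \<longrightarrow> K' = K))
      \<longleftrightarrow> (\<exists>v\<in>U. K = strong_component_of E U v)"
proof
  assume "K \<subseteq> U \<and> K \<noteq> {} \<and> strongly_connected_set V E K \<and>
          (\<forall>K'. K \<subseteq> K' \<and> K' \<subseteq> U \<and> strongly_connected_set V E K' \<longrightarrow> K' = K)"
  then have KU: "K \<subseteq> U" and "K \<noteq> {}" and K: "strongly_connected_set V E K"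
    and max: "\<And>K'. K \<subseteq> K' \<Longrightarrow> K' \<subseteq> U \<Longrightarrow> strongly_connected_set V E K' \<Longrightarrow> K' = K"
    by auto
  then obtain v where v: "v \<in> K" by blast
  with KU have vU: "v \<in> U" by (rule subsetD)
  have "strong_component_of E U v = K"
    using max strong_component_of_maximal[OF K KU v] strong_component_of_subset[OF vU]
      strongly_connected_strong_component_of[OF assms vU] .
  then show "\<exists>v\<in>U. K = strong_component_of E U v" using vU by auto
next
  assume "\<exists>v\<in>U. K = strong_component_of E U v"
  then obtain v where vU: "v \<in> U" and K: "K = strong_component_of E U v" by blast
  have "K' = K" if "K \<subseteq> K'" "K' \<subseteq> U" "strongly_connected_set V E K'" for K'
  proof -
    have "v \<in> K'" using that(1) strong_component_of_self unfolding K by fast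
    then have "K' \<subseteq> K" unfolding K by (rule strong_component_of_maximal[OF that(3,2)])
    with that(1) show ?thesis by (rule subset_antisym[rotated])
  qed
  moreover have "K \<noteq> {}" unfolding K using strong_component_of_self by fast
  ultimately show "K \<subseteq> U \<and> K \<noteq> {} \<and> strongly_connected_set V E K \<and>
          (\<forall>K'. K \<subseteq> K' \<and> K' \<subseteq> U \<and> strongly_connected_set V E K' \<longrightarrow> K' = K)"
    unfolding K using strong_component_of_subset[OF vU]
      strongly_connected_strong_component_of[OF assms vU] by blast
qed

lemma strong_components_eq_image: "strong_components V E A = strong_component_of E (V - A) ` (V - A)"
proof (rule set_eqI)
  fix K
  show "K \<in> strong_components V E A \<longleftrightarrow> K \<in> strong_component_of E (V - A) ` (V - A)"
    unfolding strong_components_def mem_Collect_eq image_iff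
      maximal_strongly_connected_iff[of "V - A" V, symmetric, OF Diff_subset] ..
qed

lemma cn_components_digraph_eq_image:
  assumes "U \<subseteq> V" "U \<noteq> {}"
  shows "cn_components V (digraph_connectoid_family V E) U = strong_component_of E U ` U"
proof (rule set_eqI)
  fix K
  have nonempty: "K \<noteq> {}"
    if "\<forall>K'. K \<subseteq> K' \<and> K' \<subseteq> U \<and> strongly_connected_set V E K' \<longrightarrow> K' = K"
  proof
    assume "K = {}"
    obtain u where "u \<in> U" using assms(2) by blast
    then have "{u} = K"
      using that \<open>K = {}\<close> assms(1) strongly_connected_set_singleton[of u V E] by blast
    then show False using \<open>K = {}\<close> by blast
  qed
  show "K \<in> cn_components V (digraph_connectoid_family V E) U \<longleftrightarrow> K \<in> strong_component_of E U ` U"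
    unfolding cn_components_def cn_connected_digraph_iff mem_Collect_eq image_iff
      maximal_strongly_connected_iff[OF assms(1), symmetric]
    using nonempty by blast
qed

lemma cn_components_digraph_eq_strong_components:
  assumes "infinite V" "finite A"
  shows "cn_components V (digraph_connectoid_family V E) (V - A) = strong_components V E A"
proof -
  have "V - A \<noteq> {}"
  proof
    assume "V - A = {}"
    then have "V \<subseteq> A" by blast
    then show False using assms by (meson finite_subset)
  qed
  then show ?thesis
    by (simp add: cn_components_digraph_eq_image strong_components_eq_image)
qed

lemma strong_componentsD:
  assumes "K \<in> strong_components V E A"
  shows "strongly_connected_set V E K" "K \<subseteq> V - A"
  using assms unfolding strong_components_def by simp_all

lemma strongly_connected_subset_strong_component:
  assumes "K \<in> strong_components V E A" "strongly_connected_set V E C" "C \<subseteq> V - A" "x \<in> C" "x \<in> K"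
  shows "C \<subseteq> K"
proof -
  obtain v where "K = strong_component_of E (V - A) v"
    using assms(1) unfolding strong_components_eq_image by blast
  then have "K = strong_component_of E (V - A) x" using strong_component_of_eq assms(5) by metis
  then show ?thesis using strong_component_of_maximal[OF assms(2,3,4)] by simp
qed

lemma strong_component_of_image_eq:
  assumes "K \<in> strong_component_of E U ` U" "K' \<in> strong_component_of E U ` U" "x \<in> K" "x \<in> K'"
  shows "K = K'"
  using assms strong_component_of_eq by (metis imageE)

lemma strong_components_disjoint:
  assumes "K \<in> strong_components V E A" "K' \<in> strong_components V E A" "x \<in> K" "x \<in> K'"
  shows "K = K'"
  using assms(1,2) strong_component_of_image_eq[OF _ _ assms(3,4)]
  unfolding strong_components_eq_image by blast

section \<open>Necklaces of a digraph\<close>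

definition necklace_chain :: "(nat \<Rightarrow> 'a set) \<Rightarrow> bool" where
  "necklace_chain H \<longleftrightarrow> (\<forall>i j. H i \<inter> H j \<noteq> {} \<longleftrightarrow> i \<le> j + 1 \<and> j \<le> i + 1)"

lemma necklace_chain_nonempty: "necklace_chain H \<Longrightarrow> H n \<noteq> {}"
  unfolding necklace_chain_def by (metis inf.idem le_add1)

lemma necklace_chain_Suc: "necklace_chain H \<Longrightarrow> H n \<inter> H (Suc n) \<noteq> {}"
  unfolding necklace_chain_def by simp

lemma necklace_chain_index_le: "necklace_chain H \<Longrightarrow> x \<in> H i \<Longrightarrow> x \<in> H j \<Longrightarrow> j \<le> i + 1"
  unfolding necklace_chain_def by blast

lemma necklace_chain_eventually_disjoint:
  assumes "necklace_chain H" "finite A"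
  obtains n0 where "\<And>n. n0 \<le> n \<Longrightarrow> H n \<inter> A = {}"
proof -
  have "{n. x \<in> H n} \<subseteq> {..i + 1}" if "x \<in> H i" for x i
    using necklace_chain_index_le[OF assms(1) that] by blast
  then have "finite {n. x \<in> H n}" for x
    by (cases "\<exists>i. x \<in> H i") (auto intro: finite_subset)
  moreover have "{n. H n \<inter> A \<noteq> {}} = (\<Union>x\<in>A. {n. x \<in> H n})" by blast
  ultimately have "finite {n. H n \<inter> A \<noteq> {}}" using assms(2) by simp
  then obtain n0 where "\<forall>n\<in>{n. H n \<inter> A \<noteq> {}}. n < n0" using finite_nat_set_iff_bounded by blast
  then show ?thesis using that by (meson leD mem_Collect_eq)
qed

lemma necklace_chain_infinite:
  assumes "necklace_chain H" shows "infinite (\<Union>n. H n)"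
proof
  assume "finite (\<Union>n. H n)"
  then obtain n0 where "\<And>n. n0 \<le> n \<Longrightarrow> H n \<inter> (\<Union>n. H n) = {}"
    using necklace_chain_eventually_disjoint[OF assms] by blast
  then show False using necklace_chain_nonempty[OF assms, of n0] by blast
qed

lemma necklace_digraph_iff:
  "necklace V (digraph_connectoid_family V E) N \<longleftrightarrow>
     (\<exists>H. (\<forall>n. finite (H n) \<and> strongly_connected_set V E (H n)) \<and> N = (\<Union>n. H n) \<and> necklace_chain H)"
proof -
  have "strongly_connected_set V E (\<Union>n. H n)"
    if "\<forall>n. finite (H n) \<and> strongly_connected_set V E (H n)" "necklace_chain H" for H
    using that strongly_connected_set_UN_chain[of V E H] necklace_chain_Suc[OF that(2)] by blast
  then show ?thesis
    unfolding necklace_def cn_connected_digraph_iff necklace_chain_def[symmetric] by metis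
qed

lemma necklace_digraph_decomposition:
  assumes "necklace V (digraph_connectoid_family V E) N"
  obtains H where "\<And>n. finite (H n)" "\<And>n. strongly_connected_set V E (H n)"
    "N = (\<Union>n. H n)" "necklace_chain H"
proof -
  from assms obtain H where H: "\<forall>n. finite (H n) \<and> strongly_connected_set V E (H n)"
    "N = (\<Union>n. H n)" "necklace_chain H"
    unfolding necklace_digraph_iff by blast
  show ?thesis using H(1) by (intro that[OF _ _ H(2,3)]) simp_all
qed

lemma necklace_digraph_subset: "necklace V (digraph_connectoid_family V E) N \<Longrightarrow> N \<subseteq> V"
  unfolding necklace_def cn_connected_def by blast

lemma necklace_digraph_infinite: "necklace V (digraph_connectoid_family V E) N \<Longrightarrow> infinite N"
  by (metis necklace_chain_infinite necklace_digraph_decomposition)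

lemma necklace_digraph_infinite_vertices:
  assumes "necklace V (digraph_connectoid_family V E) N" shows "infinite V"
  using necklace_digraph_infinite[OF assms] necklace_digraph_subset[OF assms] by (meson finite_subset)

lemma necklace_digraph_cofinite_strongly_connected:
  assumes "necklace V (digraph_connectoid_family V E) N" "finite X"
  obtains U where "U \<subseteq> N - X" "U \<noteq> {}" "strongly_connected_set V E U" "finite (N - U)"
proof -
  obtain H where H: "\<And>n. finite (H n)" "\<And>n. strongly_connected_set V E (H n)"
    "N = (\<Union>n. H n)" "necklace_chain H"
    using necklace_digraph_decomposition[OF assms(1)] by blast
  obtain n0 where n0: "\<And>n. n0 \<le> n \<Longrightarrow> H n \<inter> X = {}"
    using necklace_chain_eventually_disjoint[OF H(4) assms(2)] by blast
  define U where "U = (\<Union>n. H (n0 + n))"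
  have "U \<subseteq> N - X"
  proof
    fix x assume "x \<in> U"
    then obtain n where "x \<in> H (n0 + n)" unfolding U_def by blast
    moreover have "H (n0 + n) \<inter> X = {}" by (rule n0) simp
    ultimately show "x \<in> N - X" unfolding H(3) by blast
  qed
  moreover have "U \<noteq> {}" unfolding U_def using necklace_chain_nonempty[OF H(4)] by blast
  moreover have "strongly_connected_set V E U"
    unfolding U_def using H(2) necklace_chain_Suc[OF H(4)]
    by (intro strongly_connected_set_UN_chain) simp_all
  moreover have "N - U \<subseteq> (\<Union>k<n0. H k)"
  proof
    fix x assume "x \<in> N - U"
    then obtain k where k: "x \<in> H k" "x \<notin> U" unfolding H(3) by blast
    have "k < n0"
    proof (rule ccontr)
      assume "\<not> k < n0"
      then have "H k = H (n0 + (k - n0))" by simp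
      then show False using k unfolding U_def by blast
    qed
    then show "x \<in> (\<Union>k<n0. H k)" using k(1) by blast
  qed
  then have "finite (N - U)" using H(1) by (meson finite_UN_I finite_lessThan finite_subset)
  ultimately show ?thesis by (rule that)
qed

lemma finite_Diff_superset: "finite (N - U) \<Longrightarrow> U \<subseteq> K \<Longrightarrow> finite (N - K)"
  by (erule finite_subset[rotated]) blast

lemma cofinite_strong_component_unique:
  assumes "infinite N" "K \<in> strong_component_of E U ` U" "K' \<in> strong_component_of E U ` U"
    "finite (N - K)" "finite (N - K')"
  shows "K = K'"
proof -
  have "finite (N - (K \<inter> K'))" using assms(4,5) by (simp add: Diff_Int)
  moreover have "N - (K \<inter> K') = N" if "N \<inter> (K \<inter> K') = {}" using that by blast
  ultimately have "N \<inter> (K \<inter> K') \<noteq> {}" using assms(1) by auto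
  then obtain x where "x \<in> K" "x \<in> K'" by blast
  then show ?thesis using strong_component_of_image_eq[OF assms(2,3)] by blast
qed

lemma necklace_digraph_cofinite_component:
  assumes "necklace V (digraph_connectoid_family V E) N" "finite X"
  obtains K where "K \<in> strong_components V E X" "finite (N - K)"
proof -
  obtain U where U: "U \<subseteq> N - X" "U \<noteq> {}" "strongly_connected_set V E U" "finite (N - U)"
    using necklace_digraph_cofinite_strongly_connected[OF assms] by blast
  obtain v where v: "v \<in> U" using U(2) by blast
  have UVX: "U \<subseteq> V - X" using U(1) necklace_digraph_subset[OF assms(1)] by blast
  have "U \<subseteq> strong_component_of E (V - X) v" by (rule strong_component_of_maximal[OF U(3) UVX v])
  then have "finite (N - strong_component_of E (V - X) v)"
    by (rule finite_Diff_superset[OF U(4)])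
  moreover have "strong_component_of E (V - X) v \<in> strong_components V E X"
    unfolding strong_components_eq_image using v UVX by blast
  ultimately show ?thesis by (intro that)
qed

lemma necklace_digraph_cofinite_component_unique:
  assumes "necklace V (digraph_connectoid_family V E) N"
    "K \<in> strong_components V E X" "K' \<in> strong_components V E X" "finite (N - K)" "finite (N - K')"
  shows "K = K'"
  using cofinite_strong_component_unique[OF necklace_digraph_infinite[OF assms(1)] _ _ assms(4,5)]
    assms(2,3) unfolding strong_components_eq_image .

lemma necklace_tail_digraph:
  assumes N: "necklace V (digraph_connectoid_family V E) N"
    and U: "U \<subseteq> N - X" "strongly_connected_set V E U" "finite (N - U)" and v: "v \<in> U"
  shows "necklace_tail V (digraph_connectoid_family V E) N X = strong_component_of E (N - X) v"
proof -
  have NX: "N - X \<subseteq> V" "v \<in> N - X" using U(1) v necklace_digraph_subset[OF N] by blast+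
  then have comps: "cn_components V (digraph_connectoid_family V E) (N - X) =
      strong_component_of E (N - X) ` (N - X)"
    by (intro cn_components_digraph_eq_image) blast+
  have T: "strong_component_of E (N - X) v \<in> cn_components V (digraph_connectoid_family V E) (N - X)"
    unfolding comps using NX(2) by blast
  have "U \<subseteq> strong_component_of E (N - X) v" by (rule strong_component_of_maximal[OF U(2,1) v])
  then have finT: "finite (N - strong_component_of E (N - X) v)"
    by (rule finite_Diff_superset[OF U(3)])
  show ?thesis
    unfolding necklace_tail_def
  proof (rule the_equality)
    fix T' assume "T' \<in> cn_components V (digraph_connectoid_family V E) (N - X) \<and> finite (N - T')"
    then show "T' = strong_component_of E (N - X) v"
      using cofinite_strong_component_unique[OF necklace_digraph_infinite[OF N] _ _ _ finT] T
      unfolding comps by blast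
  qed (use T finT in blast)
qed

lemma necklace_tail_subset_iff:
  assumes N: "necklace V (digraph_connectoid_family V E) N" and X: "finite X"
    and K: "K \<in> strong_components V E X"
  shows "necklace_tail V (digraph_connectoid_family V E) N X \<subseteq> K \<longleftrightarrow> finite (N - K)"
proof -
  obtain U where U: "U \<subseteq> N - X" "U \<noteq> {}" "strongly_connected_set V E U" "finite (N - U)"
    using necklace_digraph_cofinite_strongly_connected[OF N X] by blast
  obtain v where v: "v \<in> U" using U(2) by blast
  define T where "T = strong_component_of E (N - X) v"
  have tail: "necklace_tail V (digraph_connectoid_family V E) N X = T"
    unfolding T_def by (rule necklace_tail_digraph[OF N U(1,3,4) v])
  have NX: "N - X \<subseteq> V" "v \<in> N - X" using U(1) v necklace_digraph_subset[OF N] by blast+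
  have "U \<subseteq> T" unfolding T_def by (rule strong_component_of_maximal[OF U(3,1) v])
  then have finT: "finite (N - T)" by (rule finite_Diff_superset[OF U(4)])
  define K0 where "K0 = strong_component_of E (V - X) v"
  have K0: "K0 \<in> strong_components V E X"
    unfolding K0_def strong_components_eq_image using NX by blast
  have "T \<subseteq> V - X" unfolding T_def using strong_component_of_subset[OF NX(2)] NX(1) by blast
  moreover have "strongly_connected_set V E T"
    unfolding T_def by (rule strongly_connected_strong_component_of[OF NX])
  ultimately have "T \<subseteq> K0"
    unfolding K0_def using strong_component_of_maximal strong_component_of_self[of v E "N - X"]
    unfolding T_def by metis
  show ?thesis unfolding tail
  proof
    assume "T \<subseteq> K"
    then show "finite (N - K)" by (rule finite_Diff_superset[OF finT])
  next
    assume "finite (N - K)"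
    moreover have "finite (N - K0)" using \<open>T \<subseteq> K0\<close> by (rule finite_Diff_superset[OF finT])
    ultimately show "T \<subseteq> K" using necklace_digraph_cofinite_component_unique[OF N K K0] \<open>T \<subseteq> K0\<close>
      by blast
  qed
qed

section \<open>Directions\<close>

text \<open>Off the finite subsets of \<open>V\<close> a direction is \<open>{}\<close>, so that directions can be compared
  as functions.\<close>

definition ray_direction :: "'a set \<Rightarrow> ('a \<times> 'a) set \<Rightarrow> (nat \<Rightarrow> 'a) \<Rightarrow> 'a set \<Rightarrow> 'a set" where
  "ray_direction V E r A =
     (if finite A \<and> A \<subseteq> V then THE K. K \<in> strong_components V E A \<and> tail_in r K else {})"

definition necklace_direction :: "'a set \<Rightarrow> ('a \<times> 'a) set \<Rightarrow> 'a set \<Rightarrow> 'a set \<Rightarrow> 'a set" where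
  "necklace_direction V E N A =
     (if finite A \<and> A \<subseteq> V then THE K. K \<in> strong_components V E A \<and> finite (N - K) else {})"

lemma tail_in_strong_component_unique:
  assumes "K \<in> strong_components V E A" "K' \<in> strong_components V E A" "tail_in r K" "tail_in r K'"
  shows "K = K'"
proof -
  obtain n n' where "\<forall>m\<ge>n. r m \<in> K" "\<forall>m\<ge>n'. r m \<in> K'"
    using assms(3,4) unfolding tail_in_def by blast
  then have "r (max n n') \<in> K" "r (max n n') \<in> K'" by simp_all
  then show ?thesis by (rule strong_components_disjoint[OF assms(1,2)])
qed

lemma ray_direction_eqI:
  assumes "finite A" "A \<subseteq> V" "K \<in> strong_components V E A" "tail_in r K"
  shows "ray_direction V E r A = K"
proof -
  have "(THE K. K \<in> strong_components V E A \<and> tail_in r K) = K"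
  proof (rule the_equality)
    fix K' assume "K' \<in> strong_components V E A \<and> tail_in r K'"
    then show "K' = K" using tail_in_strong_component_unique[OF _ assms(3) _ assms(4)] by blast
  qed (use assms(3,4) in blast)
  then show ?thesis unfolding ray_direction_def using assms(1,2) by simp
qed

lemma ray_direction_spec:
  assumes "solid_ray V E r" "finite A" "A \<subseteq> V"
  shows "ray_direction V E r A \<in> strong_components V E A" "tail_in r (ray_direction V E r A)"
proof -
  obtain K where "K \<in> strong_components V E A" "tail_in r K"
    using assms unfolding solid_ray_def by blast
  with ray_direction_eqI[OF assms(2,3) this] show "ray_direction V E r A \<in> strong_components V E A"
    "tail_in r (ray_direction V E r A)" by simp_all
qed

lemma necklace_direction_eqI:
  assumes "necklace V (digraph_connectoid_family V E) N"
    "finite A" "A \<subseteq> V" "K \<in> strong_components V E A" "finite (N - K)"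
  shows "necklace_direction V E N A = K"
proof -
  have "(THE K. K \<in> strong_components V E A \<and> finite (N - K)) = K"
  proof (rule the_equality)
    fix K' assume "K' \<in> strong_components V E A \<and> finite (N - K')"
    then show "K' = K"
      using necklace_digraph_cofinite_component_unique[OF assms(1) _ assms(4) _ assms(5)] by blast
  qed (use assms(4,5) in blast)
  then show ?thesis unfolding necklace_direction_def using assms(2,3) by simp
qed

lemma necklace_direction_spec:
  assumes "necklace V (digraph_connectoid_family V E) N" "finite A" "A \<subseteq> V"
  shows "necklace_direction V E N A \<in> strong_components V E A"
    "finite (N - necklace_direction V E N A)"
proof -
  obtain K where "K \<in> strong_components V E A" "finite (N - K)"
    using necklace_digraph_cofinite_component[OF assms(1,2)] by blast
  with necklace_direction_eqI[OF assms this]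
  show "necklace_direction V E N A \<in> strong_components V E A"
    "finite (N - necklace_direction V E N A)" by simp_all
qed

lemma ray_equiv_iff_direction:
  assumes "solid_ray V E r" "solid_ray V E s"
  shows "ray_equiv V E r s \<longleftrightarrow> ray_direction V E r = ray_direction V E s"
proof
  assume equiv: "ray_equiv V E r s"
  show "ray_direction V E r = ray_direction V E s"
  proof
    fix A
    show "ray_direction V E r A = ray_direction V E s A"
    proof (cases "finite A \<and> A \<subseteq> V")
      case True
      then obtain K where "K \<in> strong_components V E A" "tail_in r K" "tail_in s K"
        using equiv unfolding ray_equiv_def by blast
      then show ?thesis using True ray_direction_eqI by metis
    next
      case False
      then show ?thesis unfolding ray_direction_def by (simp only: if_False)
    qed
  qed
next
  assume "ray_direction V E r = ray_direction V E s"
  then show "ray_equiv V E r s"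
    unfolding ray_equiv_def using ray_direction_spec[OF assms(1)] ray_direction_spec[OF assms(2)] by metis
qed

lemma necklace_equiv_iff_direction:
  assumes N: "necklace V (digraph_connectoid_family V E) N"
    and N': "necklace V (digraph_connectoid_family V E) N'"
  shows "necklace_equiv V (digraph_connectoid_family V E) N N' \<longleftrightarrow>
    necklace_direction V E N = necklace_direction V E N'"
proof -
  have V: "infinite V" by (rule necklace_digraph_infinite_vertices[OF N])
  have "(\<exists>K\<in>strong_components V E A.
          necklace_tail V (digraph_connectoid_family V E) N A \<subseteq> K \<and>
          necklace_tail V (digraph_connectoid_family V E) N' A \<subseteq> K)
      \<longleftrightarrow> necklace_direction V E N A = necklace_direction V E N' A"
    (is "(\<exists>K\<in>_. ?tails K) \<longleftrightarrow> _") if A: "finite A" "A \<subseteq> V" for A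
  proof
    assume "\<exists>K\<in>strong_components V E A. ?tails K"
    then obtain K where K: "K \<in> strong_components V E A" "?tails K" by blast
    then have "finite (N - K)" "finite (N' - K)"
      using necklace_tail_subset_iff[OF N A(1) K(1)] necklace_tail_subset_iff[OF N' A(1) K(1)]
      by simp_all
    then show "necklace_direction V E N A = necklace_direction V E N' A"
      using necklace_direction_eqI[OF N A K(1)] necklace_direction_eqI[OF N' A K(1)] by simp
  next
    assume eq: "necklace_direction V E N A = necklace_direction V E N' A"
    let ?K = "necklace_direction V E N A"
    have "?K \<in> strong_components V E A" "finite (N - ?K)" "finite (N' - ?K)"
      using necklace_direction_spec[OF N A] necklace_direction_spec[OF N' A] unfolding eq by simp_all
    then show "\<exists>K\<in>strong_components V E A. ?tails K"
      using necklace_tail_subset_iff[OF N A(1)] necklace_tail_subset_iff[OF N' A(1)] by blast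
  qed
  moreover have "necklace_direction V E N A = necklace_direction V E N' A"
    if "\<not> (finite A \<and> A \<subseteq> V)" for A
    using that unfolding necklace_direction_def by (simp only: if_False)
  ultimately show ?thesis
    unfolding necklace_equiv_def fun_eq_iff
    using cn_components_digraph_eq_strong_components[OF V] by metis
qed

section \<open>From necklaces to rays\<close>

definition walk_dist :: "('a \<times> 'a) set \<Rightarrow> 'a set \<Rightarrow> 'a \<Rightarrow> nat" where
  "walk_dist R T v = (LEAST k. \<exists>w\<in>T. (v, w) \<in> R ^^ k)"

lemma walk_dist_step:
  assumes "(v, w) \<in> R\<^sup>*" "w \<in> T" "v \<notin> T"
  obtains u where "(v, u) \<in> R" "walk_dist R T u < walk_dist R T v"
proof -
  have "\<exists>k. \<exists>w\<in>T. (v, w) \<in> R ^^ k" using assms(1,2) rtrancl_power by blast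
  then have "\<exists>w\<in>T. (v, w) \<in> R ^^ walk_dist R T v" unfolding walk_dist_def by (rule LeastI_ex)
  then obtain w' where w': "w' \<in> T" "(v, w') \<in> R ^^ walk_dist R T v" by blast
  have "walk_dist R T v \<noteq> 0"
  proof
    assume "walk_dist R T v = 0"
    then show False using w' assms(3) by simp
  qed
  then obtain k where k: "walk_dist R T v = Suc k" using not0_implies_Suc by blast
  then obtain u where u: "(v, u) \<in> R" "(u, w') \<in> R ^^ k"
    using relpow_Suc_D2[of v w' k R] w'(2) by auto
  have "walk_dist R T u \<le> k" unfolding walk_dist_def by (rule Least_le) (use u(2) w'(1) in blast)
  then show ?thesis using k by (intro that[OF u(1)]) simp
qed

lemma lex_steps_strict:
  fixes \<nu> \<mu> :: "nat \<Rightarrow> nat"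
  assumes step: "\<And>t. \<nu> t < \<nu> (Suc t) \<or> \<nu> (Suc t) = \<nu> t \<and> \<mu> (Suc t) < \<mu> t" and "t < t'"
  shows "\<nu> t < \<nu> t' \<or> \<nu> t' = \<nu> t \<and> \<mu> t' < \<mu> t"
  using \<open>t < t'\<close>
proof (induction t')
  case (Suc t')
  show ?case
  proof (cases "t = t'")
    case False
    then have "t < t'" using Suc.prems by simp
    then show ?thesis using Suc.IH step[of t'] by auto
  qed (use step[of t] in blast)
qed simp

lemma necklace_chain_walk_step:
  assumes "strongly_connected_set V E (H (Suc n))" "necklace_chain H"
    "v \<in> H (Suc n)" "v \<notin> H (Suc (Suc n))"
  obtains u n' where "(v, u) \<in> E \<inter> H (Suc n) \<times> H (Suc n)"
    "u \<in> H (Suc n')" "u \<notin> H (Suc (Suc n'))"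
    "n' = Suc n \<or> n' = n \<and>
       walk_dist (E \<inter> H (Suc n) \<times> H (Suc n)) (H (Suc (Suc n))) u
         < walk_dist (E \<inter> H (Suc n) \<times> H (Suc n)) (H (Suc (Suc n))) v"
proof -
  obtain w where w: "w \<in> H (Suc n)" "w \<in> H (Suc (Suc n))"
    using necklace_chain_Suc[OF assms(2), of "Suc n"] by blast
  then have "(v, w) \<in> (E \<inter> H (Suc n) \<times> H (Suc n))\<^sup>*"
    using assms(1,3) unfolding strongly_connected_set_def by blast
  then obtain u where u: "(v, u) \<in> E \<inter> H (Suc n) \<times> H (Suc n)"
    "walk_dist (E \<inter> H (Suc n) \<times> H (Suc n)) (H (Suc (Suc n))) u
       < walk_dist (E \<inter> H (Suc n) \<times> H (Suc n)) (H (Suc (Suc n))) v"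
    using walk_dist_step w(2) assms(4) by metis
  show ?thesis
  proof (cases "u \<in> H (Suc (Suc n))")
    case True
    have "u \<in> H (Suc n)" using u(1) by blast
    then have "u \<notin> H (Suc (Suc (Suc n)))"
      using necklace_chain_index_le[OF assms(2), of u "Suc n" "Suc (Suc (Suc n))"] by auto
    with True show ?thesis using u(1) by (intro that[of u "Suc n"]) simp_all
  next
    case False
    then show ?thesis using u by (intro that[of u n]) auto
  qed
qed

text \<open>Inside bead \<open>H (n + 1)\<close>, walk along a shortest path towards \<open>H (n + 2)\<close>; on reaching it,
  continue in the next bead. The level \<open>n\<close> never decreases and, while it stays constant, the
  distance to \<open>H (n + 2)\<close> strictly decreases, which makes the walk a ray.\<close>
lemma necklace_chain_directed_ray:
  assumes H: "\<And>n. strongly_connected_set V E (H n)" and chain: "necklace_chain H"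
  obtains r where "directed_ray V E r" "range r \<subseteq> (\<Union>n. H n)"
proof -
  define d where "d n = walk_dist (E \<inter> H (Suc n) \<times> H (Suc n)) (H (Suc (Suc n)))" for n
  define P where "P t p \<longleftrightarrow> fst p \<in> H (Suc (snd p)) \<and> fst p \<notin> H (Suc (Suc (snd p)))"
    for t :: nat and p :: "'a \<times> nat"
  define Q where "Q t p p' \<longleftrightarrow> (fst p, fst p') \<in> E \<and>
      (snd p' = Suc (snd p) \<or> snd p' = snd p \<and> d (snd p) (fst p') < d (snd p) (fst p))"
    for t :: nat and p p' :: "'a \<times> nat"
  obtain v0 where "v0 \<in> H 0" "v0 \<in> H 1" using necklace_chain_Suc[OF chain, of 0] by auto
  then have "P 0 (v0, 0)" unfolding P_def using necklace_chain_index_le[OF chain, of v0 0 "Suc (Suc 0)"] by auto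
  moreover have "\<exists>p'. P (Suc t) p' \<and> Q t p p'" if "P t p" for t p
    using necklace_chain_walk_step[OF H chain, of "fst p" "snd p"] that
    unfolding P_def Q_def d_def by (metis IntD1 fst_conv snd_conv)
  ultimately obtain f where f: "\<And>t. P t (f t)" "\<And>t. Q t (f t) (f (Suc t))"
    using dependent_nat_choice[of P Q] by blast
  define r where "r t = fst (f t)" for t
  define \<nu> where "\<nu> t = snd (f t)" for t
  have in_H: "r t \<in> H (Suc (\<nu> t))" "r t \<notin> H (Suc (Suc (\<nu> t)))" for t
    using f(1) unfolding P_def r_def \<nu>_def by auto
  have "\<nu> t < \<nu> (Suc t) \<or> \<nu> (Suc t) = \<nu> t \<and> d (\<nu> (Suc t)) (r (Suc t)) < d (\<nu> t) (r t)" for t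
    using f(2)[of t] unfolding Q_def r_def \<nu>_def by auto
  note lex = lex_steps_strict[of \<nu> "\<lambda>t. d (\<nu> t) (r t)", OF this]
  have "r t \<noteq> r t'" if "t < t'" for t t'
  proof
    assume eq: "r t = r t'"
    have "\<nu> t' \<le> Suc (\<nu> t)"
      using necklace_chain_index_le[OF chain in_H(1)[of t], of "Suc (\<nu> t')"] in_H(1)[of t'] eq by simp
    moreover have "\<nu> t' \<noteq> Suc (\<nu> t)" using in_H(1)[of t'] in_H(2)[of t] eq by auto
    ultimately show False using lex[OF that] eq by auto
  qed
  then have "inj r" by (metis injI linorder_cases)
  moreover have "r t \<in> V" for t using in_H(1) H strongly_connected_set_subset by blast
  moreover have "(r t, r (Suc t)) \<in> E" for t using f(2) unfolding Q_def r_def by blast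
  ultimately have "directed_ray V E r" unfolding directed_ray_def by blast
  moreover have "range r \<subseteq> (\<Union>n. H n)" using in_H(1) by blast
  ultimately show ?thesis by (rule that)
qed

lemma tail_in_if_cofinite:
  assumes "inj r" "range r \<subseteq> N" "finite (N - K)"
  shows "tail_in r K"
proof -
  have "finite (r -` (N - K))" using finite_vimageI[OF assms(3,1)] .
  moreover have "{t. r t \<notin> K} \<subseteq> r -` (N - K)" using assms(2) by blast
  ultimately obtain n0 where "\<forall>t\<in>{t. r t \<notin> K}. t < n0"
    using finite_nat_set_iff_bounded finite_subset by meson
  then show ?thesis unfolding tail_in_def by (metis leD mem_Collect_eq)
qed

lemma necklace_direction_is_ray_direction:
  assumes N: "necklace V (digraph_connectoid_family V E) N"
  obtains r where "solid_ray V E r" "ray_direction V E r = necklace_direction V E N"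
proof -
  obtain H where H: "\<And>n. finite (H n)" "\<And>n. strongly_connected_set V E (H n)"
    "N = (\<Union>n. H n)" "necklace_chain H"
    using necklace_digraph_decomposition[OF N] by blast
  obtain r where r: "directed_ray V E r" "range r \<subseteq> N"
    by (rule necklace_chain_directed_ray[OF H(2,4), folded H(3)])
  have tail: "tail_in r (necklace_direction V E N A)" if "finite A" "A \<subseteq> V" for A
    using tail_in_if_cofinite[OF _ r(2) necklace_direction_spec(2)[OF N that]] r(1)
    unfolding directed_ray_def by blast
  have "solid_ray V E r"
    unfolding solid_ray_def using r(1) tail necklace_direction_spec(1)[OF N] by blast
  moreover have "ray_direction V E r A = necklace_direction V E N A" for A
  proof (cases "finite A \<and> A \<subseteq> V")
    case True
    then show ?thesis
      using ray_direction_eqI[OF _ _ necklace_direction_spec(1)[OF N] tail] by blast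
  next
    case False
    then show ?thesis unfolding ray_direction_def necklace_direction_def by (simp only: if_False)
  qed
  ultimately show ?thesis by (intro that[of r]) auto
qed

section \<open>From rays to necklaces\<close>

lemma ray_direction_antimono:
  assumes r: "solid_ray V E r" and A': "finite A'" "A' \<subseteq> V" and "A \<subseteq> A'"
  shows "ray_direction V E r A' \<subseteq> ray_direction V E r A"
proof -
  have A: "finite A" "A \<subseteq> V" using A' \<open>A \<subseteq> A'\<close> finite_subset by auto
  obtain n n' where "\<forall>q\<ge>n. r q \<in> ray_direction V E r A" "\<forall>q\<ge>n'. r q \<in> ray_direction V E r A'"
    using ray_direction_spec(2)[OF r A] ray_direction_spec(2)[OF r A'] unfolding tail_in_def by blast
  then have "r (max n n') \<in> ray_direction V E r A" "r (max n n') \<in> ray_direction V E r A'" by simp_all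
  moreover have "ray_direction V E r A' \<subseteq> V - A"
    using strong_componentsD(2)[OF ray_direction_spec(1)[OF r A']] \<open>A \<subseteq> A'\<close> by blast
  ultimately show ?thesis
    using strongly_connected_subset_strong_component[OF ray_direction_spec(1)[OF r A]
        strong_componentsD(1)[OF ray_direction_spec(1)[OF r A']]] by blast
qed

lemma necklace_chainI:
  assumes "\<And>n. H n \<inter> H (Suc n) \<noteq> {}" "\<And>n k. k < n \<Longrightarrow> H (Suc n) \<inter> H k = {}"
  shows "necklace_chain H"
  unfolding necklace_chain_def
proof (intro allI iffI)
  have far: "H i \<inter> H j = {}" if "j + 1 < i" for i j :: nat
    using assms(2)[of j "i - 1"] that by (simp add: Suc_diff_1)
  fix i j :: nat
  assume "H i \<inter> H j \<noteq> {}"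
  then have "\<not> j + 1 < i" "\<not> i + 1 < j" using far[of i j] far[of j i] by (auto simp: Int_commute)
  then show "i \<le> j + 1 \<and> j \<le> i + 1" by linarith
next
  fix i j :: nat
  assume "i \<le> j + 1 \<and> j \<le> i + 1"
  then consider "i = j" | "j = Suc i" | "i = Suc j" by linarith
  then show "H i \<inter> H j \<noteq> {}" by cases (use assms(1)[of i] assms(1)[of j] in auto)
qed

lemma solid_ray_next_bead:
  assumes r: "solid_ray V E r" and A: "finite A" "A \<subseteq> V"
    and H: "finite H" "strongly_connected_set V E H" and q: "r q \<in> ray_direction V E r A"
  obtains H' q' where "finite H'" "strongly_connected_set V E H'" "H' \<subseteq> ray_direction V E r A"
    "r q \<in> H'" "r q' \<in> H'" "q < q'" "r q' \<in> ray_direction V E r (A \<union> H)"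
proof -
  have AH: "finite (A \<union> H)" "A \<union> H \<subseteq> V" using A H strongly_connected_set_subset[OF H(2)] by auto
  obtain q0 where "\<forall>t\<ge>q0. r t \<in> ray_direction V E r (A \<union> H)"
    using ray_direction_spec(2)[OF r AH] unfolding tail_in_def by blast
  then have q': "q < max (Suc q) q0" "r (max (Suc q) q0) \<in> ray_direction V E r (A \<union> H)"
    by simp_all
  then have "r (max (Suc q) q0) \<in> ray_direction V E r A"
    using ray_direction_antimono[OF r AH] by blast
  moreover have "strongly_connected_set V E (ray_direction V E r A)"
    by (rule strong_componentsD(1)[OF ray_direction_spec(1)[OF r A]])
  ultimately obtain H' where "finite H'" "strongly_connected_set V E H'"
    "H' \<subseteq> ray_direction V E r A" "r q \<in> H'" "r (max (Suc q) q0) \<in> H'"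
    using strongly_connected_set_finite_witness q by metis
  with q' show ?thesis by (intro that[of H' "max (Suc q) q0"])
qed

text \<open>Bead \<open>n + 1\<close> is chosen inside the component \<open>K(A\<^sub>n, r)\<close>, where \<open>A\<^sub>n\<close> is the union of
  the earlier beads; it joins two vertices \<open>r (m n)\<close>, \<open>r (m (n + 1))\<close> of the ray, the latter lying
  in \<open>K(A\<^sub>n \<union> H\<^sub>n, r)\<close> so that the construction can be continued.\<close>
lemma solid_ray_beads:
  assumes r: "solid_ray V E r"
  obtains A H m where "\<And>n. finite (A n) \<and> A n \<subseteq> V" "\<And>n. finite (H n)"
    "\<And>n. strongly_connected_set V E (H n)" "\<And>n. A (Suc n) = A n \<union> H n"
    "\<And>n. H (Suc n) \<subseteq> ray_direction V E r (A n)" "\<And>n. r (m n) \<in> H n \<inter> H (Suc n)"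
    "strict_mono m"
proof -
  define C where "C = ray_direction V E r"
  define P where "P n p \<longleftrightarrow> (case p of (A, H, q) \<Rightarrow> finite A \<and> A \<subseteq> V \<and> finite H \<and>
      strongly_connected_set V E H \<and> r q \<in> H \<and> r q \<in> C A)" for n :: nat and p
  define Q where "Q n p p' \<longleftrightarrow> (case (p, p') of ((A, H, q), (A', H', q')) \<Rightarrow>
      A' = A \<union> H \<and> H' \<subseteq> C A \<and> r q \<in> H' \<and> q < q')" for n :: nat and p p'
  have step: "\<exists>p'. P (Suc n) p' \<and> Q n p p'" if "P n p" for n p
  proof -
    obtain A H q where p: "p = (A, H, q)" by (cases p)
    then have A: "finite A" "A \<subseteq> V" and H: "finite H" "strongly_connected_set V E H"
      and q: "r q \<in> C A" using that unfolding P_def by auto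
    obtain H' q' where "finite H'" "strongly_connected_set V E H'" "H' \<subseteq> C A"
      "r q \<in> H'" "r q' \<in> H'" "q < q'" "r q' \<in> C (A \<union> H)"
      using solid_ray_next_bead[OF r A H q[unfolded C_def]] unfolding C_def by blast
    then have "P (Suc n) (A \<union> H, H', q') \<and> Q n p (A \<union> H, H', q')"
      unfolding P_def Q_def p using A H strongly_connected_set_subset[OF H(2)] by auto
    then show ?thesis by (rule exI)
  qed
  obtain q0 where "\<forall>t\<ge>q0. r t \<in> C {}"
    using ray_direction_spec(2)[OF r, of "{}"] unfolding C_def tail_in_def by auto
  then have "P 0 ({}, {r q0}, q0)"
    using strongly_connected_set_singleton[of "r q0" V E] r
    unfolding P_def solid_ray_def directed_ray_def by auto
  then have "\<exists>f. \<forall>n. P n (f n) \<and> Q n (f n) (f (Suc n))"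
    using step by (intro dependent_nat_choice) blast+
  then obtain f where f: "\<And>n. P n (f n)" "\<And>n. Q n (f n) (f (Suc n))" by blast
  define A where "A n = fst (f n)" for n
  define H where "H n = fst (snd (f n))" for n
  define m where "m n = snd (snd (f n))" for n
  have f_eq: "f n = (A n, H n, m n)" for n unfolding A_def H_def m_def by simp
  have "finite (A n) \<and> A n \<subseteq> V \<and> finite (H n) \<and> strongly_connected_set V E (H n) \<and> r (m n) \<in> H n"
    for n using f(1)[of n] unfolding P_def f_eq by simp
  moreover have "A (Suc n) = A n \<union> H n \<and> H (Suc n) \<subseteq> C (A n) \<and> r (m n) \<in> H (Suc n) \<and> m n < m (Suc n)"
    for n using f(2)[of n] unfolding Q_def f_eq by simp
  ultimately show ?thesis by (intro that[of A H m]) (auto simp: strict_mono_Suc_iff C_def)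
qed

lemma necklace_chain_cofinite_in_component:
  assumes H: "\<And>n. finite (H n)" "\<And>n. strongly_connected_set V E (H n)" "necklace_chain H"
    and K: "K \<in> strong_components V E A" "finite A"
    and meets: "\<And>n. n0 \<le> n \<Longrightarrow> H n \<inter> K \<noteq> {}"
  shows "finite ((\<Union>n. H n) - K)"
proof -
  obtain n1 where n1: "\<And>n. n1 \<le> n \<Longrightarrow> H n \<inter> A = {}"
    using necklace_chain_eventually_disjoint[OF H(3) K(2)] by blast
  have "H n \<subseteq> K" if n: "max n0 n1 \<le> n" for n
  proof -
    have "H n \<subseteq> V - A" using n1[of n] n strongly_connected_set_subset[OF H(2)] by auto
    moreover obtain x where "x \<in> H n" "x \<in> K" using meets[of n] n by auto
    ultimately show ?thesis using strongly_connected_subset_strong_component[OF K(1) H(2)] by blast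
  qed
  then have "(\<Union>n. H n) - K \<subseteq> (\<Union>k<max n0 n1. H k)" by (auto simp: not_less[symmetric])
  then show ?thesis using H(1) by (meson finite_UN_I finite_lessThan finite_subset)
qed

lemma ray_direction_is_necklace_direction:
  assumes r: "solid_ray V E r"
  obtains N where "necklace V (digraph_connectoid_family V E) N"
    "necklace_direction V E N = ray_direction V E r"
proof -
  obtain A H m where A: "\<And>n. finite (A n) \<and> A n \<subseteq> V" and H: "\<And>n. finite (H n)"
    "\<And>n. strongly_connected_set V E (H n)" and A_Suc: "\<And>n. A (Suc n) = A n \<union> H n"
    and H_Suc: "\<And>n. H (Suc n) \<subseteq> ray_direction V E r (A n)"
    and m: "\<And>n. r (m n) \<in> H n \<inter> H (Suc n)" "strict_mono m"
    by (rule solid_ray_beads[OF r]) (rule that)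
  have earlier: "H k \<subseteq> A n" if "k < n" for k n
    using that by (induction n) (auto simp: A_Suc less_Suc_eq)
  have "H (Suc n) \<inter> H k = {}" if "k < n" for n k
    using H_Suc[of n] earlier[OF that] strong_componentsD(2)[OF ray_direction_spec(1)[OF r]] A
    by blast
  moreover have "H n \<inter> H (Suc n) \<noteq> {}" for n using m(1)[of n] by blast
  ultimately have chain: "necklace_chain H" by (intro necklace_chainI)
  define N where "N = (\<Union>n. H n)"
  have N: "necklace V (digraph_connectoid_family V E) N"
    unfolding necklace_digraph_iff N_def using H chain by (intro exI[of _ H]) simp
  have "finite (N - ray_direction V E r B)" if B: "finite B" "B \<subseteq> V" for B
  proof -
    obtain p where p: "\<forall>q\<ge>p. r q \<in> ray_direction V E r B"
      using ray_direction_spec(2)[OF r B] unfolding tail_in_def by blast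
    have "r (m n) \<in> H n \<inter> ray_direction V E r B" if "p \<le> n" for n
      using m p that strict_mono_imp_increasing[OF m(2), of n] by auto
    then have "H n \<inter> ray_direction V E r B \<noteq> {}" if "p \<le> n" for n
      using that by blast
    then show ?thesis unfolding N_def
      by (rule necklace_chain_cofinite_in_component[OF H chain ray_direction_spec(1)[OF r B] B(1)])
  qed
  then have "necklace_direction V E N B = ray_direction V E r B" for B
    using necklace_direction_eqI[OF N _ _ ray_direction_spec(1)[OF r]]
    unfolding necklace_direction_def ray_direction_def by (cases "finite B \<and> B \<subseteq> V") auto
  with N show ?thesis by (intro that) auto
qed

lemma ray_directions_eq_necklace_directions:
  "ray_direction V E ` {r. solid_ray V E r} =
     necklace_direction V E ` {N. necklace V (digraph_connectoid_family V E) N}"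
proof (intro equalityI subsetI)
  fix d assume "d \<in> ray_direction V E ` {r. solid_ray V E r}"
  then obtain r where "solid_ray V E r" "d = ray_direction V E r" by blast
  then show "d \<in> necklace_direction V E ` {N. necklace V (digraph_connectoid_family V E) N}"
    by (metis (mono_tags, lifting) image_eqI mem_Collect_eq ray_direction_is_necklace_direction)
next
  fix d assume "d \<in> necklace_direction V E ` {N. necklace V (digraph_connectoid_family V E) N}"
  then obtain N where "necklace V (digraph_connectoid_family V E) N" "d = necklace_direction V E N"
    by blast
  then show "d \<in> ray_direction V E ` {r. solid_ray V E r}"
    by (metis (mono_tags, lifting) image_eqI mem_Collect_eq necklace_direction_is_ray_direction)
qed

section \<open>End spaces as spaces of directions\<close>

lemma continuous_map_topology_generated_by_image:
  assumes "inj_on g (\<Union>\<B>)"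
  shows "continuous_map (topology_generated_by \<B>) (topology_generated_by ((`) g ` \<B>)) g"
proof (rule continuous_on_generated_topo)
  fix U assume "U \<in> (`) g ` \<B>"
  then obtain b where b: "b \<in> \<B>" "U = g ` b" by blast
  then have "g -` U \<inter> \<Union>\<B> = b" using assms unfolding inj_on_def by blast
  then show "openin (topology_generated_by \<B>) (g -` U \<inter> topspace (topology_generated_by \<B>))"
    using b(1) by (simp add: topology_generated_by_Basis)
qed auto

lemma homeomorphic_topology_generated_by_image:
  assumes inj: "inj_on g (\<Union>\<B>)"
  shows "topology_generated_by \<B> homeomorphic_space topology_generated_by ((`) g ` \<B>)"
proof -
  define h where "h = inv_into (\<Union>\<B>) g"
  have hg: "h (g x) = x" if "x \<in> \<Union>\<B>" for x unfolding h_def using inv_into_f_f[OF inj that] .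
  have "h ` g ` b = b" if "b \<in> \<B>" for b
    unfolding h_def using inv_into_image_cancel[OF inj, of b] that by blast
  then have "(`) h ` (`) g ` \<B> = \<B>" unfolding image_image by (simp cong: image_cong)
  moreover have "inj_on h (\<Union>((`) g ` \<B>))" unfolding h_def by (rule inj_on_inv_into) blast
  ultimately have "continuous_map (topology_generated_by ((`) g ` \<B>)) (topology_generated_by \<B>) h"
    using continuous_map_topology_generated_by_image[of h "(`) g ` \<B>"] by simp
  moreover have "g (h y) = y" if "y \<in> \<Union>((`) g ` \<B>)" for y
    using that f_inv_into_f[of y g "\<Union>\<B>"] unfolding h_def by blast
  ultimately have "homeomorphic_maps (topology_generated_by \<B>) (topology_generated_by ((`) g ` \<B>)) g h"
    unfolding homeomorphic_maps_def
    using continuous_map_topology_generated_by_image[OF inj] hg by simp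
  then show ?thesis unfolding homeomorphic_space_def by blast
qed

lemma classes_of_equal_directions:
  assumes R: "\<And>x y. P x \<Longrightarrow> P y \<Longrightarrow> R x y \<longleftrightarrow> d x = d y"
  shows "\<exists>G. (\<forall>x. P x \<longrightarrow> G {y. P y \<and> R x y} = d x) \<and> inj_on G {{y. P y \<and> R x y} | x. P x}"
proof -
  define cls where "cls x = {y. P y \<and> R x y}" for x
  have cls_eq: "cls x = cls y \<longleftrightarrow> d x = d y" if x: "P x" and y: "P y" for x y
  proof
    assume "cls x = cls y"
    moreover have "y \<in> cls y" unfolding cls_def using R[OF y y] y by simp
    ultimately have "R x y" unfolding cls_def by blast
    then show "d x = d y" using R[OF x y] by simp
  next
    assume "d x = d y"
    then have "R x z \<longleftrightarrow> R y z" if "P z" for z using R[OF x that] R[OF y that] by simp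
    then show "cls x = cls y" unfolding cls_def by blast
  qed
  define G where "G \<omega> = d (SOME x. P x \<and> \<omega> = cls x)" for \<omega>
  have G: "G (cls x) = d x" if x: "P x" for x
  proof -
    have "P (SOME y. P y \<and> cls x = cls y) \<and> cls x = cls (SOME y. P y \<and> cls x = cls y)"
      using x by (intro someI) simp
    then show ?thesis unfolding G_def using cls_eq[OF x] by (metis (mono_tags))
  qed
  have "inj_on G {cls x | x. P x}"
  proof (rule inj_onI)
    fix \<omega> \<omega>' assume "\<omega> \<in> {cls x | x. P x}" "\<omega>' \<in> {cls x | x. P x}" "G \<omega> = G \<omega>'"
    then obtain x x' where "P x" "P x'" "\<omega> = cls x" "\<omega>' = cls x'" "d x = d x'" using G by auto
    then show "\<omega> = \<omega>'" using cls_eq by simp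
  qed
  moreover have "\<forall>x. P x \<longrightarrow> G (cls x) = d x" using G by blast
  ultimately show ?thesis unfolding cls_def by (intro exI[of _ G] conjI)
qed

text \<open>An abstract end space: the classes of \<open>R\<close>, topologised by prescribing the value \<open>K\<close> of
  the invariant \<open>c A\<close>; the hypothesis \<open>c\<close> says that this invariant is read off the direction.\<close>
lemma end_space_homeomorphic_direction_space:
  fixes d :: "'r \<Rightarrow> 'b \<Rightarrow> 'k" and c :: "'b \<Rightarrow> 'r set \<Rightarrow> 'k"
  assumes R: "\<And>x y. P x \<Longrightarrow> P y \<Longrightarrow> R x y \<longleftrightarrow> d x = d y"
    and c: "\<And>x A K. P x \<Longrightarrow> basic A K \<Longrightarrow> c A {y. P y \<and> R x y} = d x A"
  shows "subtopology
      (topology_generated_by {{\<omega> \<in> {{y. P y \<and> R x y} | x. P x}. c A \<omega> = K} | A K. basic A K})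
      {{y. P y \<and> R x y} | x. P x}
    homeomorphic_space topology_generated_by {{f \<in> d ` {x. P x}. f A = K} | A K. basic A K}"
    (is "subtopology (topology_generated_by ?\<B>) ?\<Omega> homeomorphic_space _")
proof -
  have "\<exists>G. (\<forall>x. P x \<longrightarrow> G {y. P y \<and> R x y} = d x) \<and> inj_on G ?\<Omega>"
    by (rule classes_of_equal_directions) (rule R)
  then obtain G where G: "\<forall>x. P x \<longrightarrow> G {y. P y \<and> R x y} = d x" and inj: "inj_on G ?\<Omega>"
    by (elim exE conjE)
  have image: "G ` {\<omega> \<in> ?\<Omega>. c A \<omega> = K} = {f \<in> d ` {x. P x}. f A = K}" if A: "basic A K" for A K
  proof (intro equalityI subsetI)
    fix f assume "f \<in> G ` {\<omega> \<in> ?\<Omega>. c A \<omega> = K}"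
    then obtain x where "P x" "c A {y. P y \<and> R x y} = K" "f = G {y. P y \<and> R x y}" by blast
    then show "f \<in> {f \<in> d ` {x. P x}. f A = K}" using G c[OF _ A] by simp
  next
    fix f assume "f \<in> {f \<in> d ` {x. P x}. f A = K}"
    then obtain x where x: "P x" "d x A = K" "f = d x" by blast
    have "{y. P y \<and> R x y} \<in> ?\<Omega>" by (intro CollectI exI[of _ x] conjI) (simp_all add: x(1))
    then have "{y. P y \<and> R x y} \<in> {\<omega> \<in> ?\<Omega>. c A \<omega> = K}" using c[OF x(1) A] x(2) by simp
    moreover have "f = G {y. P y \<and> R x y}" using G x(1,3) by simp
    ultimately show "f \<in> G ` {\<omega> \<in> ?\<Omega>. c A \<omega> = K}" by blast
  qed
  have "(`) G ` ?\<B> = {{f \<in> d ` {x. P x}. f A = K} | A K. basic A K}"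
  proof (intro equalityI subsetI)
    fix X assume "X \<in> (`) G ` ?\<B>"
    then obtain A K where AK: "basic A K" "X = G ` {\<omega> \<in> ?\<Omega>. c A \<omega> = K}" by blast
    then show "X \<in> {{f \<in> d ` {x. P x}. f A = K} | A K. basic A K}"
      using image[OF AK(1)] by (intro CollectI exI[of _ A] exI[of _ K]) simp
  next
    fix X assume "X \<in> {{f \<in> d ` {x. P x}. f A = K} | A K. basic A K}"
    then obtain A K where AK: "basic A K" "X = G ` {\<omega> \<in> ?\<Omega>. c A \<omega> = K}" using image by blast
    then have "{\<omega> \<in> ?\<Omega>. c A \<omega> = K} \<in> ?\<B>" by (intro CollectI exI[of _ A] exI[of _ K]) simp
    then show "X \<in> (`) G ` ?\<B>" using AK(2) by (rule rev_image_eqI)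
  qed
  moreover have B_sub: "\<Union>?\<B> \<subseteq> ?\<Omega>" by (rule Union_least) auto
  then have "topology_generated_by ?\<B> homeomorphic_space topology_generated_by ((`) G ` ?\<B>)"
    using inj by (intro homeomorphic_topology_generated_by_image) (rule inj_on_subset)
  moreover have "subtopology (topology_generated_by ?\<B>) ?\<Omega> = topology_generated_by ?\<B>"
    using B_sub by (intro subtopology_superset) simp
  ultimately show ?thesis by simp
qed

lemma dg_end_comp_eq_ray_direction:
  assumes r: "solid_ray V E r" and A: "finite A" "A \<subseteq> V"
  shows "dg_end_comp V E A {s. solid_ray V E s \<and> ray_equiv V E r s} = ray_direction V E r A"
  unfolding dg_end_comp_def
proof (rule the_equality)
  have "tail_in s (ray_direction V E r A)" if "solid_ray V E s" "ray_equiv V E r s" for s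
    using ray_direction_spec(2)[OF that(1) A] ray_equiv_iff_direction[OF r that(1)] that(2) by simp
  then show "ray_direction V E r A \<in> strong_components V E A \<and>
      (\<forall>s\<in>{s. solid_ray V E s \<and> ray_equiv V E r s}. tail_in s (ray_direction V E r A))"
    using ray_direction_spec(1)[OF r A] by blast
next
  fix K
  assume K: "K \<in> strong_components V E A \<and> (\<forall>s\<in>{s. solid_ray V E s \<and> ray_equiv V E r s}. tail_in s K)"
  have "ray_equiv V E r r" using ray_equiv_iff_direction[OF r r] by simp
  then have "tail_in r K" using K r by blast
  then show "K = ray_direction V E r A" using ray_direction_eqI[OF A conjunct1[OF K]] by simp
qed

lemma dg_end_space_homeomorphic_directions:
  "dg_end_space V E homeomorphic_space topology_generated_by
     {{f \<in> ray_direction V E ` {r. solid_ray V E r}. f A = K} | A K.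
        finite A \<and> A \<subseteq> V \<and> K \<in> strong_components V E A}"
  unfolding dg_end_space_def dg_ends_def
  by (rule end_space_homeomorphic_direction_space[where P = "solid_ray V E" and R = "ray_equiv V E"
      and d = "ray_direction V E" and c = "dg_end_comp V E"
      and basic = "\<lambda>A K. finite A \<and> A \<subseteq> V \<and> K \<in> strong_components V E A"])
    (simp_all add: ray_equiv_iff_direction dg_end_comp_eq_ray_direction)

lemma cn_end_comp_eq_necklace_direction:
  assumes N: "necklace V (digraph_connectoid_family V E) N" and A: "finite A" "A \<subseteq> V"
  shows "cn_end_comp V (digraph_connectoid_family V E) A
      {M. necklace V (digraph_connectoid_family V E) M \<and>
          necklace_equiv V (digraph_connectoid_family V E) N M}
    = necklace_direction V E N A"
proof -
  let ?F = "digraph_connectoid_family V E"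
  let ?cls = "{M. necklace V ?F M \<and> necklace_equiv V ?F N M}"
  have V: "infinite V" by (rule necklace_digraph_infinite_vertices[OF N])
  have tail: "necklace_tail V ?F M A \<subseteq> necklace_direction V E N A" if "M \<in> ?cls" for M
  proof -
    have M: "necklace V ?F M" "necklace_direction V E M = necklace_direction V E N"
      using that necklace_equiv_iff_direction[OF N] by auto
    show ?thesis
      using necklace_tail_subset_iff[OF M(1) A(1) necklace_direction_spec(1)[OF M(1) A]]
        necklace_direction_spec(2)[OF M(1) A] M(2) by simp
  qed
  show ?thesis
    unfolding cn_end_comp_def cn_components_digraph_eq_strong_components[OF V A(1)]
  proof (rule the_equality)
    show "necklace_direction V E N A \<in> strong_components V E A \<and>
        (\<forall>M\<in>?cls. necklace_tail V ?F M A \<subseteq> necklace_direction V E N A)"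
      using necklace_direction_spec(1)[OF N A] tail by blast
  next
    fix K assume K: "K \<in> strong_components V E A \<and> (\<forall>M\<in>?cls. necklace_tail V ?F M A \<subseteq> K)"
    have "N \<in> ?cls" using N necklace_equiv_iff_direction[OF N N] by simp
    then have "finite (N - K)" using K necklace_tail_subset_iff[OF N A(1)] by blast
    then show "K = necklace_direction V E N A" using necklace_direction_eqI[OF N A conjunct1[OF K]] by simp
  qed
qed

lemma cn_end_space_homeomorphic_directions:
  assumes "infinite V"
  shows "cn_end_space V (digraph_connectoid_family V E) homeomorphic_space topology_generated_by
     {{f \<in> necklace_direction V E ` {N. necklace V (digraph_connectoid_family V E) N}. f A = K} | A K.
        finite A \<and> A \<subseteq> V \<and> K \<in> strong_components V E A}"
proof -
  let ?F = "digraph_connectoid_family V E"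
  have "cn_end_space V ?F homeomorphic_space topology_generated_by
     {{f \<in> necklace_direction V E ` {N. necklace V ?F N}. f A = K} | A K.
        finite A \<and> A \<subseteq> V \<and> K \<in> cn_components V ?F (V - A)}"
    unfolding cn_end_space_def cn_ends_def
    by (rule end_space_homeomorphic_direction_space[where P = "necklace V ?F"
        and R = "necklace_equiv V ?F" and d = "necklace_direction V E" and c = "cn_end_comp V ?F"
        and basic = "\<lambda>A K. finite A \<and> A \<subseteq> V \<and> K \<in> cn_components V ?F (V - A)"])
      (simp_all add: necklace_equiv_iff_direction cn_end_comp_eq_necklace_direction)
  then show ?thesis
    by (simp add: cn_components_digraph_eq_strong_components[OF assms] cong: conj_cong)
qed

lemma dg_ends_finite: "finite V \<Longrightarrow> dg_ends V E = {}"
proof -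
  assume V: "finite V"
  have "\<not> solid_ray V E r" for r
  proof
    assume "solid_ray V E r"
    then have "inj r" "range r \<subseteq> V" unfolding solid_ray_def directed_ray_def by auto
    then show False using range_inj_infinite V finite_subset by blast
  qed
  then show ?thesis unfolding dg_ends_def by blast
qed

lemma cn_ends_digraph_finite: "finite V \<Longrightarrow> cn_ends V (digraph_connectoid_family V E) = {}"
proof -
  assume V: "finite V"
  have "\<not> necklace V (digraph_connectoid_family V E) N" for N
    using necklace_digraph_infinite_vertices[of V E N] V by auto
  then show ?thesis unfolding cn_ends_def by blast
qed

theorem lemma4p5:
  fixes V :: "'a set" and E :: "('a \<times> 'a) set"
  assumes "E \<subseteq> V \<times> V"
  shows "dg_end_space V E homeomorphic_space
           cn_end_space V (digraph_connectoid_family V E)"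
proof (cases "finite V")
  case True
  then show ?thesis
    unfolding dg_end_space_def cn_end_space_def dg_ends_finite[OF True] cn_ends_digraph_finite[OF True]
    by (simp add: homeomorphic_empty_space_eq)
next
  case False
  from dg_end_space_homeomorphic_directions[of V E]
  have "dg_end_space V E homeomorphic_space topology_generated_by
     {{f \<in> necklace_direction V E ` {N. necklace V (digraph_connectoid_family V E) N}. f A = K} | A K.
        finite A \<and> A \<subseteq> V \<and> K \<in> strong_components V E A}"
    unfolding ray_directions_eq_necklace_directions .
  also have "\<dots> homeomorphic_space cn_end_space V (digraph_connectoid_family V E)"
    using cn_end_space_homeomorphic_directions[OF False] homeomorphic_space_sym by blast
  finally show ?thesis .
qed

end
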